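(* Let $s\in[\tfrac12,1)$, $m\ge1$, and let $\alpha_s,\beta_s>0$ be constants depending only on $s$. Define $\Xi_s$ on $\{(q_1,\dots,q_m)\}$ by \[ \Xi_s=\sum_{i=1}^m\Big(\alpha_sU(2q_i)+\beta_s\varepsilon^{2s-1}|2q_i|^{2s-1}\Big)+\sum_{i\neq j}\Big(\alpha_sU(q_i-q_j)+\beta_s\varepsilon^{2s-1}|q_i-q_j|^{2s-1}\Big)+\sum_{i\neq j}\Big(\alpha_sU(q_i+q_j)+\beta_s\varepsilon^{2s-1}|q_i+q_j|^{2s-1}\Big) \] for $s\in(\frac12,1)$, and \[ \Xi_{\frac12}=\sum_{i=1}^m\Big(\alpha_{\frac12}U(2q_i)+\tfrac{\beta_{\frac12}}{\log\frac1\varepsilon}\log|2q_i|\Big)+\sum_{i\neq j}\Big(\alpha_{\frac12}U(q_i-q_j)+\tfrac{\beta_{\frac12}}{\log\frac1\varepsilon}\log|q_i-q_j|\Big)+\sum_{i\neq j}\Big(\alpha_{\frac12}U(q_i+q_j)+\tfrac{\beta_{\frac12}}{\log\frac1\varepsilon}\log|q_i+q_j|\Big) \] for $s=\frac12$ (sums over ordered pairs $i\ne j$). Then, provided $\eta>0$ is sufficiently small (and $\varepsilon>0$ is sufficiently small), $\Xi_s$ admits a global minimum point over $\overline{Q_{s,\eta}}$ lying in the interior of $Q_{s,\eta}$.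
   Context: $U$ is the unique positive even solution of $(-\Delta)^sU+U-U^2=0$ in $\mathbb{R}$ vanishing at infinity ($(-\Delta)^s$ the fractional Laplacian with Fourier symbol $|\xi|^{2s}$); it satisfies $U(x)=\mathfrak b_s|x|^{-1-2s}(1+o(1))$ as $|x|\to\infty$ for some $\mathfrak b_s>0$. For $\eta>0$, $Q_{s,\eta}$ is the set of $(q_1,\dots,q_m)$ with $\frac1\eta\ell_\varepsilon>q_i>\eta\ell_\varepsilon$ for all $i$ and $|q_i-q_j|>\eta\ell_\varepsilon$ for $i\ne j$, where $\ell_\varepsilon=\varepsilon^{\frac{1-2s}{4s}}$ if $s\in(\frac12,1)$ and $\ell_\varepsilon=(\log\frac1\varepsilon)^{1/2}$ if $s=\frac12$. *)

theory Defs
  imports "HOL-Analysis.Analysis"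
begin

text \<open>Normalising constant of the one-dimensional fractional Laplacian with
  Fourier symbol |xi|^(2s):  C_s = s 4^s Gamma(1/2+s) / (sqrt pi Gamma(1-s)).\<close>
definition frac_const :: "real \<Rightarrow> real" where
  "frac_const s = s * 4 powr s * Gamma (1/2 + s) / (sqrt pi * Gamma (1 - s))"

definition frac_lap_at :: "real \<Rightarrow> (real \<Rightarrow> real) \<Rightarrow> real \<Rightarrow> real \<Rightarrow> bool" where
  "frac_lap_at s u x L \<longleftrightarrow>
     (\<forall>\<delta>>0. (\<lambda>y. (u x - u y) / (\<bar>x - y\<bar>) powr (1 + 2* s)) integrable_on {y. \<delta> \<le> \<bar>x - y\<bar>}) \<and>
     ((\<lambda>\<delta>. frac_const s * integral {y. \<delta> \<le> \<bar>x - y\<bar>} (\<lambda>y. (u x - u y) / (\<bar>x - y\<bar>) powr (1 + 2* s)))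
        \<longlongrightarrow> L) (at_right 0)"

definition is_ground_state :: "real \<Rightarrow> (real \<Rightarrow> real) \<Rightarrow> bool" where
  "is_ground_state s U \<longleftrightarrow>
     continuous_on UNIV U \<and> (\<forall>x. 0 < U x) \<and> (\<forall>x. U (-x) = U x) \<and>
     (U \<longlongrightarrow> 0) at_infinity \<and>
     (\<forall>x. frac_lap_at s U x (U x ^ 2 - U x))"

definition ell :: "real \<Rightarrow> real \<Rightarrow> real" where
  "ell s \<epsilon> = (if s = 1/2 then sqrt (ln (1/\<epsilon>)) else \<epsilon> powr ((1 - 2* s) / (4* s)))"

definition Qset :: "real \<Rightarrow> real \<Rightarrow> real \<Rightarrow> (real^'m) set" where
  "Qset s \<eta> \<epsilon> = {q. (\<forall>i. \<eta> * ell s \<epsilon> < q$i \<and> q$i < ell s \<epsilon> / \<eta>) \<and>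
                    (\<forall>i j. i \<noteq> j \<longrightarrow> \<eta> * ell s \<epsilon> < \<bar>q$i - q$j\<bar>)}"

definition Xi_term :: "real \<Rightarrow> real \<Rightarrow> real \<Rightarrow> (real \<Rightarrow> real) \<Rightarrow> real \<Rightarrow> real \<Rightarrow> real" where
  "Xi_term s \<alpha> \<beta> U \<epsilon> x =
     \<alpha> * U x + (if s = 1/2 then \<beta> / ln (1/\<epsilon>) * ln \<bar>x\<bar>
                 else \<beta> * \<epsilon> powr (2* s - 1) * (\<bar>x\<bar>) powr (2* s - 1))"

definition Xi :: "real \<Rightarrow> real \<Rightarrow> real \<Rightarrow> (real \<Rightarrow> real) \<Rightarrow> real \<Rightarrow> real^'m \<Rightarrow> real" where
  "Xi s \<alpha> \<beta> U \<epsilon> q =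
     (\<Sum>i\<in>UNIV. Xi_term s \<alpha> \<beta> U \<epsilon> (2 * q$i))
     + (\<Sum>i\<in>UNIV. \<Sum>j\<in>UNIV - {i}. Xi_term s \<alpha> \<beta> U \<epsilon> (q$i - q$j))
     + (\<Sum>i\<in>UNIV. \<Sum>j\<in>UNIV - {i}. Xi_term s \<alpha> \<beta> U \<epsilon> (q$i + q$j))"

end

theory Submission
  imports Defs "HOL-Real_Asymp.Real_Asymp"
begin

text \<open>
  Rescale \<open>q = \<ell> y\<close> with \<open>\<ell> = ell s \<epsilon>\<close>. Once all arguments \<open>2 q$i\<close>, \<open>q$i \<plusminus> q$j\<close>
  of the interaction term exceed a radius beyond which \<open>U x\<close> is within a factor 2 of
  \<open>b |x| powr (-1 - 2s)\<close>, each term is a configuration-independent constant plus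
  \<open>\<ell> powr (-1 - 2s)\<close> times the reduced term \<open>a |y| powr (-1 - 2s) + \<beta> growth s |y|\<close>,
  with \<open>a\<close> between \<open>\<alpha> b / 2\<close> and \<open>2 \<alpha> b\<close>. The reduced term is bounded below, and on the
  boundary of \<open>Q\<^sub>s\<^sub>,\<^sub>\<eta>\<close> some argument of a rescaled configuration is either below \<open>2\<eta>\<close>,
  where the repulsive part is at least \<open>a / (4\<eta>)\<close>, or above \<open>2/\<eta>\<close>, where the growth part is
  at least of order \<open>ln (2/\<eta>)\<close>. So for small \<open>\<eta>\<close> every boundary configuration has more
  energy than the fixed configuration \<open>y = (1, \<dots>, m)\<close>, and the minimum over the compact
  closure lies inside.
\<close>

definition growth :: "real \<Rightarrow> real \<Rightarrow> real" where
  "growth s t = (if s = 1/2 then ln t else t powr (2 * s - 1))"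

text \<open>For \<open>s = 1/2\<close>, splitting \<open>ln |x| = ln \<ell>\<^sub>\<epsilon> + ln (|x| / \<ell>\<^sub>\<epsilon>)\<close> leaves this
  configuration-independent constant in every interaction term.\<close>
definition Xi_shift :: "real \<Rightarrow> real \<Rightarrow> real \<Rightarrow> real" where
  "Xi_shift s \<beta> \<epsilon> = (if s = 1/2 then \<beta> / ln (1/\<epsilon>) * ln (ell s \<epsilon>) else 0)"

definition reduced_term :: "real \<Rightarrow> real \<Rightarrow> real \<Rightarrow> real \<Rightarrow> real" where
  "reduced_term s a \<beta> t = a * t powr (-1 - 2 * s) + \<beta> * growth s t"

definition slots :: "real^'m \<Rightarrow> real set" where
  "slots q = range (\<lambda>i. 2 * q$i) \<union> {q$i - q$j |i j. i \<noteq> j} \<union> {q$i + q$j |i j. i \<noteq> j}"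

definition slot_sum :: "(real \<Rightarrow> real) \<Rightarrow> real^'m \<Rightarrow> real" where
  "slot_sum F q = (\<Sum>i\<in>UNIV. F (2 * q$i))
     + (\<Sum>i\<in>UNIV. \<Sum>j\<in>UNIV - {i}. F (q$i - q$j))
     + (\<Sum>i\<in>UNIV. \<Sum>j\<in>UNIV - {i}. F (q$i + q$j))"

lemma slots_memI:
  "2 * q$i \<in> slots q" "i \<noteq> j \<Longrightarrow> q$i - q$j \<in> slots q" "i \<noteq> j \<Longrightarrow> q$i + q$j \<in> slots q"
  by (auto simp: slots_def)

lemma Xi_eq_slot_sum: "Xi s \<alpha> \<beta> U \<epsilon> = slot_sum (Xi_term s \<alpha> \<beta> U \<epsilon>)"
  by (simp add: fun_eq_iff Xi_def slot_sum_def)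

lemma slot_sum_mono:
  assumes "\<And>x. x \<in> slots q \<Longrightarrow> F x \<le> G x"
  shows "slot_sum F q \<le> slot_sum G q"
  unfolding slot_sum_def by (intro add_mono sum_mono) (auto intro!: assms slots_memI)

lemma slot_sum_affine:
  "slot_sum (\<lambda>x. c + k * F x) q = slot_sum (\<lambda>_. c) q + k * slot_sum F q"
  unfolding slot_sum_def sum.distrib sum_distrib_left distrib_left by linarith

lemma slot_sum_const: "slot_sum (\<lambda>_. c) (q :: real^'m) = slot_sum (\<lambda>_. c) (p :: real^'m)"
  by (simp add: slot_sum_def)

lemma slot_sum_scaleR:
  assumes "c \<noteq> 0"
  shows "slot_sum (\<lambda>x. F (x / c)) (c *\<^sub>R q) = slot_sum F q"
  using assms by (simp add: slot_sum_def flip: right_diff_distrib distrib_left)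

lemma member_le_slot_sum:
  fixes q :: "real^'m"
  assumes nonneg: "\<And>x. x \<in> slots q \<Longrightarrow> 0 \<le> F x" and x: "x \<in> slots q"
  shows "F x \<le> slot_sum F q"
proof -
  have pair_le: "F (h i j) \<le> (\<Sum>i\<in>UNIV. \<Sum>j\<in>UNIV - {i}. F (h i j))"
    if "i \<noteq> j" and h: "\<And>i j. i \<noteq> j \<Longrightarrow> 0 \<le> F (h i j)" for h :: "'m \<Rightarrow> 'm \<Rightarrow> real" and i j
  proof -
    have "F (h i j) \<le> (\<Sum>j\<in>UNIV - {i}. F (h i j))"
      using that by (intro member_le_sum) auto
    also have "\<dots> \<le> (\<Sum>i\<in>UNIV. \<Sum>j\<in>UNIV - {i}. F (h i j))"
      using h by (intro member_le_sum sum_nonneg) auto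
    finally show ?thesis .
  qed
  have sums_nonneg: "0 \<le> (\<Sum>i\<in>UNIV. F (2 * q$i))"
    "0 \<le> (\<Sum>i\<in>UNIV. \<Sum>j\<in>UNIV - {i}. F (q$i - q$j))"
    "0 \<le> (\<Sum>i\<in>UNIV. \<Sum>j\<in>UNIV - {i}. F (q$i + q$j))"
    by (auto intro!: sum_nonneg nonneg slots_memI)
  from x consider i where "x = 2 * q$i"
    | i j where "i \<noteq> j" "x = q$i - q$j" | i j where "i \<noteq> j" "x = q$i + q$j"
    unfolding slots_def by blast
  then show ?thesis
  proof cases
    case (1 i)
    then have "F x \<le> (\<Sum>i\<in>UNIV. F (2 * q$i))"
      by (auto intro!: member_le_sum[where f = "\<lambda>i. F (2 * q$i)"] nonneg slots_memI)
    then show ?thesis using sums_nonneg unfolding slot_sum_def by linarith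
  next
    case (2 i j)
    then have "F x \<le> (\<Sum>i\<in>UNIV. \<Sum>j\<in>UNIV - {i}. F (q$i - q$j))"
      using nonneg pair_le[of i j "\<lambda>i j. q$i - q$j"] by (auto intro!: slots_memI)
    then show ?thesis using sums_nonneg unfolding slot_sum_def by linarith
  next
    case (3 i j)
    then have "F x \<le> (\<Sum>i\<in>UNIV. \<Sum>j\<in>UNIV - {i}. F (q$i + q$j))"
      using nonneg pair_le[of i j "\<lambda>i j. q$i + q$j"] by (auto intro!: slots_memI)
    then show ?thesis using sums_nonneg unfolding slot_sum_def by linarith
  qed
qed

lemma isCont_slot_sum:
  fixes p :: "real^'m"
  assumes "\<And>x. x \<in> slots p \<Longrightarrow> isCont F x"
  shows "isCont (slot_sum F) p"
proof -
  have compose: "isCont (\<lambda>q. F (g q)) p" if "isCont g p" "g p \<in> slots p" for g :: "real^'m \<Rightarrow> real"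
    using that assms by (intro isCont_o2[of p g F]) auto
  show ?thesis
    unfolding slot_sum_def by (intro continuous_intros compose) (auto intro!: slots_memI)
qed

definition Qopen :: "real \<Rightarrow> real \<Rightarrow> (real^'m) set" where
  "Qopen \<eta> l = {q. (\<forall>i. \<eta> * l < q$i \<and> q$i < l / \<eta>) \<and> (\<forall>i j. i \<noteq> j \<longrightarrow> \<eta> * l < \<bar>q$i - q$j\<bar>)}"

definition Qclosed :: "real \<Rightarrow> real \<Rightarrow> (real^'m) set" where
  "Qclosed \<eta> l = {q. (\<forall>i. \<eta> * l \<le> q$i \<and> q$i \<le> l / \<eta>) \<and> (\<forall>i j. i \<noteq> j \<longrightarrow> \<eta> * l \<le> \<bar>q$i - q$j\<bar>)}"

lemma Qset_eq_Qopen: "Qset s \<eta> \<epsilon> = Qopen \<eta> (ell s \<epsilon>)"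
  by (simp add: Qset_def Qopen_def)

lemma Qopen_subset_Qclosed: "Qopen \<eta> l \<subseteq> Qclosed \<eta> l"
  by (auto simp: Qopen_def Qclosed_def dest: less_imp_le)

lemma compact_Qclosed: "compact (Qclosed \<eta> l :: (real^'m) set)"
proof -
  have "closed {q::real^'m. i \<noteq> j \<longrightarrow> \<eta> * l \<le> \<bar>q$i - q$j\<bar>}" for i j
  proof (cases "i = j")
    case False
    then show ?thesis
      by (simp add: closed_Collect_le continuous_on_component continuous_intros)
  qed simp
  then have "closed {q::real^'m. \<forall>i j. i \<noteq> j \<longrightarrow> \<eta> * l \<le> \<bar>q$i - q$j\<bar>}"
    by (intro closed_Collect_all)
  then have "compact (cbox (\<chi> i. \<eta> * l) (\<chi> i. l / \<eta>) \<inter> {q::real^'m. \<forall>i j. i \<noteq> j \<longrightarrow> \<eta> * l \<le> \<bar>q$i - q$j\<bar>})"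
    by (rule compact_Int_closed[OF compact_cbox])
  moreover have "(Qclosed \<eta> l :: (real^'m) set) = cbox (\<chi> i. \<eta> * l) (\<chi> i. l / \<eta>) \<inter> {q. \<forall>i j. i \<noteq> j \<longrightarrow> \<eta> * l \<le> \<bar>q$i - q$j\<bar>}"
    by (auto simp: Qclosed_def mem_box_cart)
  ultimately show ?thesis
    by simp
qed

lemma Qclosed_slot_abs_ge:
  assumes q: "q \<in> Qclosed \<eta> l" and nonneg: "0 \<le> \<eta> * l" and x: "x \<in> slots q"
  shows "\<eta> * l \<le> \<bar>x\<bar>"
proof -
  have coord: "\<eta> * l \<le> q$i" for i
    using q by (simp add: Qclosed_def)
  from x consider i where "x = 2 * q$i"
    | i j where "i \<noteq> j" "x = q$i - q$j" | i j where "i \<noteq> j" "x = q$i + q$j"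
    unfolding slots_def by blast
  then show ?thesis
  proof cases
    case (1 i)
    then show ?thesis
      using coord[of i] nonneg by linarith
  next
    case (2 i j)
    then show ?thesis
      using q by (simp add: Qclosed_def)
  next
    case (3 i j)
    then show ?thesis
      using coord[of i] coord[of j] nonneg by linarith
  qed
qed

lemma Qclosed_boundary_slot:
  assumes q: "q \<in> Qclosed \<eta> l - Qopen \<eta> l" and "0 < \<eta>" "0 \<le> l"
  shows "\<exists>x\<in>slots q. \<bar>x\<bar> \<le> 2 * \<eta> * l \<or> 2 * l / \<eta> \<le> \<bar>x\<bar>"
proof -
  have nonneg: "0 \<le> q$i" for i
    using q assms by (auto simp: Qclosed_def intro: order_trans[of 0 "\<eta> * l"])
  from q consider i where "q$i \<le> \<eta> * l" | i where "l / \<eta> \<le> q$i"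
    | i j where "i \<noteq> j" "\<bar>q$i - q$j\<bar> \<le> \<eta> * l"
    by (auto simp: Qopen_def Qclosed_def not_less)
  then show ?thesis
  proof cases
    case (1 i)
    then show ?thesis using nonneg[of i] by (intro bexI[OF _ slots_memI(1)[of q i]]) auto
  next
    case (2 i)
    then show ?thesis using nonneg[of i] by (intro bexI[OF _ slots_memI(1)[of q i]]) auto
  next
    case (3 i j)
    then show ?thesis using assms by (intro bexI[OF _ slots_memI(2)]) auto
  qed
qed

lemma scaleR_mem_Qopen:
  assumes "0 < l" "y \<in> Qopen \<eta> 1"
  shows "l *\<^sub>R y \<in> Qopen \<eta> l"
proof -
  have "l * y$i < l * (1 / \<eta>)" "\<eta> * l < l * y$i" for i
    using assms by (auto simp: Qopen_def simp del: times_divide_eq_right)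
  moreover have "\<eta> * l < l * \<bar>y$i - y$j\<bar>" if "i \<noteq> j" for i j
    using assms that by (auto simp: Qopen_def)
  ultimately show ?thesis
    using assms(1) by (auto simp: Qopen_def abs_mult simp flip: right_diff_distrib)
qed

lemma eventually_mem_Qopen: "\<exists>y::real^'m. \<forall>\<^sub>F \<eta> in at_right 0. y \<in> Qopen \<eta> 1"
proof -
  define n where "n = CARD('m)"
  obtain f :: "'m \<Rightarrow> nat" where f: "bij_betw f UNIV {0..<n}"
    using ex_bij_betw_finite_nat[of "UNIV :: 'm set"] by (auto simp: n_def)
  have f_inj: "f i \<noteq> f j" if "i \<noteq> j" for i j
    using f that by (auto simp: bij_betw_def inj_on_def)
  have f_less: "f i < n" for i
    using f by (auto simp: bij_betw_def)
  define y :: "real^'m" where "y = (\<chi> i. 1 + real (f i))"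
  have "y \<in> Qopen \<eta> 1" if "0 < \<eta>" "\<eta> < 1 / (real n + 1)" for \<eta>
  proof -
    have bound: "\<eta> * (real n + 1) < 1"
      using that by (simp add: field_simps)
    moreover have "\<eta> \<le> \<eta> * (real n + 1)"
      using that by simp
    ultimately have "\<eta> < 1"
      by linarith
    have "real n < 1 / \<eta>"
      using that bound by (simp add: field_simps)
    have "\<eta> < y$i \<and> y$i < 1 / \<eta>" for i
      using f_less[of i] \<open>\<eta> < 1\<close> \<open>real n < 1 / \<eta>\<close> unfolding y_def by simp
    moreover have "\<eta> < \<bar>y$i - y$j\<bar>" if "i \<noteq> j" for i j
      using f_inj[OF that] \<open>\<eta> < 1\<close> unfolding y_def by simp
    ultimately show ?thesis
      by (simp add: Qopen_def)
  qed
  moreover have "\<forall>\<^sub>F \<eta> in at_right 0. 0 < \<eta> \<and> \<eta> < 1 / (real n + 1)"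
    by (intro eventually_conj eventually_at_right_less)
      (auto simp: eventually_at_right_field intro!: exI[of _ "1 / (real n + 1)"])
  ultimately have "\<forall>\<^sub>F \<eta> in at_right 0. y \<in> Qopen \<eta> 1"
    by (auto elim: eventually_mono)
  then show ?thesis ..
qed

lemma ell_pos: "0 < \<epsilon> \<Longrightarrow> \<epsilon> < 1 \<Longrightarrow> 0 < ell s \<epsilon>"
  by (auto simp: ell_def)

lemma ell_at_top:
  assumes "1/2 \<le> s" "s < 1"
  shows "filterlim (ell s) at_top (at_right 0)"
proof (cases "s = 1/2")
  case True
  then have "ell s = (\<lambda>\<epsilon>. sqrt (ln (1/\<epsilon>)))"
    by (simp add: fun_eq_iff ell_def)
  moreover have "filterlim (\<lambda>\<epsilon>. sqrt (ln (1/\<epsilon>))) at_top (at_right 0)"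
    by real_asymp
  ultimately show ?thesis by simp
next
  case False
  then have "ell s = (\<lambda>\<epsilon>. \<epsilon> powr ((1 - 2 * s) / (4 * s)))" "(1 - 2 * s) / (4 * s) < 0"
    using assms by (simp_all add: fun_eq_iff ell_def divide_neg_pos)
  moreover have "filterlim (\<lambda>\<epsilon>. \<epsilon> powr c) at_top (at_right 0)" if "c < 0" for c :: real
    using that by real_asymp
  ultimately show ?thesis by simp
qed

lemma Xi_term_rescaled:
  assumes s: "1/2 \<le> s" "s < 1" and \<epsilon>: "0 < \<epsilon>" "\<epsilon> < 1" and x: "x \<noteq> 0"
  shows "Xi_term s \<alpha> \<beta> U \<epsilon> x
    = \<alpha> * U x + Xi_shift s \<beta> \<epsilon> + ell s \<epsilon> powr (-1 - 2 * s) * \<beta> * growth s (\<bar>x\<bar> / ell s \<epsilon>)"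
proof -
  define l where "l = ell s \<epsilon>"
  have l: "0 < l"
    using ell_pos[OF \<epsilon>] by (simp add: l_def)
  have "Xi_term s \<alpha> \<beta> U \<epsilon> x = \<alpha> * U x + Xi_shift s \<beta> \<epsilon> + l powr (-1 - 2 * s) * \<beta> * growth s (\<bar>x\<bar> / l)"
  proof (cases "s = 1/2")
    case True
    have ln_eq: "ln (1/\<epsilon>) = l^2"
      using \<epsilon> True by (simp add: l_def ell_def)
    have powr_eq: "l powr (- 2) = 1 / l^2"
      using l by (simp add: powr_minus inverse_eq_divide)
    have "ln \<bar>x\<bar> = ln l + ln (\<bar>x\<bar> / l)"
      using l x by (simp add: ln_div)
    then have "Xi_term s \<alpha> \<beta> U \<epsilon> x = \<alpha> * U x + \<beta> / l^2 * ln l + 1 / l^2 * \<beta> * ln (\<bar>x\<bar> / l)"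
      using True by (simp add: Xi_term_def ln_eq distrib_left)
    moreover have "Xi_shift s \<beta> \<epsilon> = \<beta> / l^2 * ln l"
      using True by (simp add: Xi_shift_def ln_eq l_def)
    ultimately show ?thesis
      by (simp add: True powr_eq growth_def)
  next
    case False
    have "\<epsilon> powr (2 * s - 1) * l powr (2 * s - 1) = l powr (-1 - 2 * s)"
    proof -
      have "(2 * s - 1) + (1 - 2 * s) / (4 * s) * (2 * s - 1) = (1 - 2 * s) / (4 * s) * (-1 - 2 * s)"
        using s by (simp add: field_simps)
      then show ?thesis
        using False by (simp add: l_def ell_def powr_powr flip: powr_add)
    qed
    moreover have "\<bar>x\<bar> powr (2 * s - 1) = l powr (2 * s - 1) * (\<bar>x\<bar> / l) powr (2 * s - 1)"
      using l x by (simp flip: powr_mult)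
    ultimately show ?thesis
      using False by (simp add: Xi_term_def Xi_shift_def growth_def mult.assoc)
  qed
  then show ?thesis
    by (simp add: l_def)
qed

lemma growth_ge_ln:
  assumes "1/2 \<le> s" "1 \<le> t"
  shows "(if s = 1/2 then 1 else 2 * s - 1) * ln t \<le> growth s t"
proof (cases "s = 1/2")
  case False
  have "(2 * s - 1) * ln t \<le> exp ((2 * s - 1) * ln t)"
    using exp_ge_add_one_self[of "(2 * s - 1) * ln t"] by linarith
  then show ?thesis
    using False assms by (simp add: growth_def powr_def)
qed (simp add: growth_def)

lemma reduced_term_lower:
  assumes "1/2 \<le> s" and a: "0 < a" and "0 \<le> \<beta>" and t: "0 < t"
  shows "a/2 * t powr (-1 - 2 * s) - \<beta>^2 / (2 * a) \<le> reduced_term s a \<beta> t"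
proof (cases "s = 1/2")
  case True
  define u where "u = 1 / t"
  have "-1 - 2 * s = - 2"
    using True by simp
  then have "t powr (-1 - 2 * s) = inverse (t powr 2)"
    by (simp add: powr_minus)
  also have "\<dots> = u^2"
    using t by (simp add: u_def power_one_over inverse_eq_divide)
  finally have powr_eq: "t powr (-1 - 2 * s) = u^2" .
  have "ln (1/t) \<le> 1/t - 1"
    using t by (intro ln_le_minus_one) simp
  then have "- u \<le> ln t"
    using t by (simp add: u_def ln_div)
  then have "- (\<beta> * u) \<le> \<beta> * ln t"
    using assms by (metis minus_mult_right mult_left_mono)
  moreover have "\<beta> * u - \<beta>^2 / (2 * a) \<le> a/2 * u^2"
  proof -
    have "0 \<le> (a * u - \<beta>)^2"
      by simp
    then have "2 * a * (\<beta> * u) \<le> a^2 * u^2 + \<beta>^2"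
      by (simp add: power2_diff power_mult_distrib algebra_simps)
    then show ?thesis
      using a by (simp add: field_simps power2_eq_square)
  qed
  ultimately show ?thesis
    using True powr_eq by (simp add: reduced_term_def growth_def)
next
  case False
  have "0 \<le> \<beta> * growth s t" "0 \<le> \<beta>^2 / (2 * a)" "a/2 * t powr (-1 - 2 * s) \<le> a * t powr (-1 - 2 * s)"
    using False assms by (simp_all add: growth_def)
  then show ?thesis
    unfolding reduced_term_def by linarith
qed

lemma Xi_term_bounds:
  assumes s: "1/2 \<le> s" "s < 1" and \<epsilon>: "0 < \<epsilon>" "\<epsilon> < 1" and \<alpha>: "0 < \<alpha>" and x: "x \<noteq> 0"
    and U: "b * \<bar>x\<bar> powr (-1 - 2 * s) / 2 \<le> U x" "U x \<le> 2 * (b * \<bar>x\<bar> powr (-1 - 2 * s))"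
  shows "Xi_shift s \<beta> \<epsilon> + ell s \<epsilon> powr (-1 - 2 * s) * reduced_term s (\<alpha> * b / 2) \<beta> (\<bar>x\<bar> / ell s \<epsilon>)
           \<le> Xi_term s \<alpha> \<beta> U \<epsilon> x"
    and "Xi_term s \<alpha> \<beta> U \<epsilon> x
           \<le> Xi_shift s \<beta> \<epsilon> + ell s \<epsilon> powr (-1 - 2 * s) * reduced_term s (2 * \<alpha> * b) \<beta> (\<bar>x\<bar> / ell s \<epsilon>)"
proof -
  define l where "l = ell s \<epsilon>"
  have l: "0 < l"
    using ell_pos[OF \<epsilon>] by (simp add: l_def)
  have "\<bar>x\<bar> powr (-1 - 2 * s) = l powr (-1 - 2 * s) * (\<bar>x\<bar> / l) powr (-1 - 2 * s)"
    using l x by (simp flip: powr_mult)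
  moreover have "\<alpha> * (b * \<bar>x\<bar> powr (-1 - 2 * s) / 2) \<le> \<alpha> * U x"
    "\<alpha> * U x \<le> \<alpha> * (2 * (b * \<bar>x\<bar> powr (-1 - 2 * s)))"
    using U \<alpha> by simp_all
  ultimately show "Xi_shift s \<beta> \<epsilon> + ell s \<epsilon> powr (-1 - 2 * s) * reduced_term s (\<alpha> * b / 2) \<beta> (\<bar>x\<bar> / ell s \<epsilon>)
           \<le> Xi_term s \<alpha> \<beta> U \<epsilon> x"
    and "Xi_term s \<alpha> \<beta> U \<epsilon> x
           \<le> Xi_shift s \<beta> \<epsilon> + ell s \<epsilon> powr (-1 - 2 * s) * reduced_term s (2 * \<alpha> * b) \<beta> (\<bar>x\<bar> / ell s \<epsilon>)"
    unfolding Xi_term_rescaled[OF s \<epsilon> x] reduced_term_def l_def[symmetric]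
    by (simp_all add: algebra_simps)
qed

lemma isCont_Xi_term:
  assumes "continuous_on UNIV U" "x \<noteq> 0"
  shows "isCont (Xi_term s \<alpha> \<beta> U \<epsilon>) x"
proof -
  have cont: "isCont U x" "isCont (\<lambda>y. ln \<bar>y\<bar>) x" "isCont (\<lambda>y. \<bar>y\<bar> powr (2 * s - 1)) x"
    using assms by (auto simp: continuous_on_eq_continuous_at intro!: continuous_intros)
  have "isCont (\<lambda>y. \<alpha> * U y + \<beta> / ln (1/\<epsilon>) * ln \<bar>y\<bar>) x"
    "isCont (\<lambda>y. \<alpha> * U y + \<beta> * \<epsilon> powr (2 * s - 1) * \<bar>y\<bar> powr (2 * s - 1)) x"
    by (intro continuous_add continuous_mult continuous_const cont)+
  then show ?thesis
    unfolding Xi_term_def by (cases "s = 1/2") simp_all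
qed

lemma eventually_ratio_bounds:
  fixes f g :: "'a \<Rightarrow> real"
  assumes lim: "((\<lambda>x. f x / g x) \<longlongrightarrow> 1) F" and pos: "\<forall>\<^sub>F x in F. 0 < g x"
  shows "\<forall>\<^sub>F x in F. g x / 2 \<le> f x \<and> f x \<le> 2 * g x"
proof -
  have "\<forall>\<^sub>F x in F. \<bar>f x / g x - 1\<bar> < 1/2"
    using tendstoD[OF lim, of "1/2"] by (simp add: dist_real_def)
  with pos show ?thesis
  proof eventually_elim
    case (elim x)
    then have "1/2 < f x / g x" "f x / g x < 2"
      by linarith+
    with \<open>0 < g x\<close> show ?case
      by (simp add: field_simps)
  qed
qed

lemma asymp_power_tail_bounds:
  fixes f :: "real \<Rightarrow> real"
  assumes b: "0 < b" and lim: "((\<lambda>x. f x / (b * \<bar>x\<bar> powr p)) \<longlongrightarrow> 1) at_infinity"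
  obtains R where "0 < R"
    "\<And>x. R \<le> \<bar>x\<bar> \<Longrightarrow> b * \<bar>x\<bar> powr p / 2 \<le> f x \<and> f x \<le> 2 * (b * \<bar>x\<bar> powr p)"
proof -
  have "\<forall>\<^sub>F x in at_infinity. 0 < b * \<bar>x\<bar> powr p"
    using b by (auto simp: eventually_at_infinity intro!: exI[of _ 1])
  from eventually_ratio_bounds[OF lim this] obtain R0 where
    "\<And>x. R0 \<le> \<bar>x\<bar> \<Longrightarrow> b * \<bar>x\<bar> powr p / 2 \<le> f x \<and> f x \<le> 2 * (b * \<bar>x\<bar> powr p)"
    unfolding eventually_at_infinity by auto
  then show ?thesis
    by (intro that[of "max R0 1"]) simp_all
qed

lemma reduced_term_boundary_lower:
  assumes s: "1/2 \<le> s" and a: "0 < a" and \<beta>: "0 < \<beta>" and \<eta>: "0 < \<eta>" "\<eta> < 1/2"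
    and t: "0 < t" "t \<le> 2 * \<eta> \<or> 2 / \<eta> \<le> t"
  shows "min (a / (4 * \<eta>)) (\<beta> * (if s = 1/2 then 1 else 2 * s - 1) * ln (2 / \<eta>))
           \<le> reduced_term s a \<beta> t + \<beta>^2 / (2 * a)"
proof -
  have lower: "a/2 * t powr (-1 - 2 * s) \<le> reduced_term s a \<beta> t + \<beta>^2 / (2 * a)"
    using reduced_term_lower[OF s a _ t(1), of \<beta>] \<beta> by linarith
  from t(2) show ?thesis
  proof
    assume small: "t \<le> 2 * \<eta>"
    have "1 / (2 * \<eta>) \<le> 1 / t"
      using small t(1) \<eta> by (intro divide_left_mono mult_pos_pos) auto
    also have "\<dots> = t powr (-1)"
      using t(1) by (simp add: powr_minus_divide)
    also have "\<dots> \<le> t powr (-1 - 2 * s)"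
      using small \<eta> t(1) s by (intro powr_mono') auto
    finally have "a/2 * (1 / (2 * \<eta>)) \<le> a/2 * t powr (-1 - 2 * s)"
      using a by (intro mult_left_mono) auto
    then show ?thesis
      using lower by (simp add: min_le_iff_disj)
  next
    assume large: "2 / \<eta> \<le> t"
    have "1 \<le> 2 / \<eta>"
      using \<eta> by (simp add: field_simps)
    then have "1 \<le> t"
      using large by linarith
    have "ln (2 / \<eta>) \<le> ln t"
      using large \<eta> by (intro ln_mono) auto
    then have "\<beta> * (if s = 1/2 then 1 else 2 * s - 1) * ln (2 / \<eta>)
        \<le> \<beta> * ((if s = 1/2 then 1 else 2 * s - 1) * ln t)"
      using \<beta> s by (simp add: mult.assoc)
    also have "\<dots> \<le> \<beta> * growth s t"
      using growth_ge_ln[OF s \<open>1 \<le> t\<close>] \<beta> by (intro mult_left_mono) auto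
    also have "\<dots> \<le> reduced_term s a \<beta> t + \<beta>^2 / (2 * a)"
    proof -
      have "0 \<le> a * t powr (-1 - 2 * s)" "0 \<le> \<beta>^2 / (2 * a)"
        using a by simp_all
      then show ?thesis
        unfolding reduced_term_def by linarith
    qed
    finally show ?thesis
      by (simp add: min_le_iff_disj)
  qed
qed

lemma reduced_energy_boundary_lower:
  fixes q :: "real^'m"
  assumes s: "1/2 \<le> s" and a: "0 < a" and \<beta>: "0 < \<beta>" and \<eta>: "0 < \<eta>" "\<eta> < 1/2" and l: "0 < l"
    and q: "q \<in> Qclosed \<eta> l - Qopen \<eta> l"
  shows "slot_sum (\<lambda>_. - (\<beta>^2 / (2 * a))) q
      + min (a / (4 * \<eta>)) (\<beta> * (if s = 1/2 then 1 else 2 * s - 1) * ln (2 / \<eta>))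
    \<le> slot_sum (\<lambda>x. reduced_term s a \<beta> (\<bar>x\<bar> / l)) q"
proof -
  define \<phi> where "\<phi> x = reduced_term s a \<beta> (\<bar>x\<bar> / l) + \<beta>^2 / (2 * a)" for x
  have slot_pos: "0 < \<bar>x\<bar> / l" if "x \<in> slots q" for x
  proof -
    have "0 < \<eta> * l"
      using \<eta> l by simp
    then show ?thesis
      using Qclosed_slot_abs_ge[of q \<eta> l x] q that l by simp
  qed
  have \<phi>_nonneg: "0 \<le> \<phi> x" if "x \<in> slots q" for x
  proof -
    have "0 \<le> a/2 * (\<bar>x\<bar> / l) powr (-1 - 2 * s)"
      using a by simp
    then show ?thesis
      using reduced_term_lower[OF s a _ slot_pos[OF that], of \<beta>] \<beta> unfolding \<phi>_def by linarith
  qed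
  obtain x where x: "x \<in> slots q" and "\<bar>x\<bar> \<le> 2 * \<eta> * l \<or> 2 * l / \<eta> \<le> \<bar>x\<bar>"
    using Qclosed_boundary_slot[OF q] \<eta> l by auto
  then have "\<bar>x\<bar> / l \<le> 2 * \<eta> \<or> 2 / \<eta> \<le> \<bar>x\<bar> / l"
    using l by (auto simp: field_simps)
  from reduced_term_boundary_lower[OF s a \<beta> \<eta> slot_pos[OF x] this]
  have "min (a / (4 * \<eta>)) (\<beta> * (if s = 1/2 then 1 else 2 * s - 1) * ln (2 / \<eta>)) \<le> \<phi> x"
    by (simp add: \<phi>_def)
  also have "\<phi> x \<le> slot_sum \<phi> q"
    using \<phi>_nonneg x by (rule member_le_slot_sum)
  also have "slot_sum \<phi> q = slot_sum (\<lambda>x. reduced_term s a \<beta> (\<bar>x\<bar> / l)) q - slot_sum (\<lambda>_. - (\<beta>^2 / (2 * a))) q"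
    using slot_sum_affine[of "- (\<beta>^2 / (2 * a))" 1 \<phi> q] by (simp add: \<phi>_def)
  finally show ?thesis
    by linarith
qed

lemma reduced_energy_boundary_blowup:
  assumes s: "1/2 \<le> s" "s < 1" and a: "0 < a" and \<beta>: "0 < \<beta>"
  shows "\<forall>\<^sub>F \<eta> in at_right 0. \<forall>l>0. \<forall>q \<in> Qclosed \<eta> l - Qopen \<eta> l.
           M < slot_sum (\<lambda>x. reduced_term s a \<beta> (\<bar>x\<bar> / l)) (q :: real^'m)"
proof -
  define \<gamma> :: real where "\<gamma> = (if s = 1/2 then 1 else 2 * s - 1)"
  have \<gamma>: "0 < \<gamma>"
    using s by (simp add: \<gamma>_def)
  define K where "K = M - slot_sum (\<lambda>_. - (\<beta>^2 / (2 * a))) (0 :: real^'m)"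
  have "\<forall>\<^sub>F \<eta> in at_right (0::real). 0 < \<eta> \<and> \<eta> < 1/2"
    by (intro eventually_conj eventually_at_right_less)
      (auto simp: eventually_at_right_field intro!: exI[of _ "1/2"])
  moreover have "filterlim (\<lambda>\<eta>. a / (4 * \<eta>)) at_top (at_right 0)"
    using a by real_asymp
  then have "\<forall>\<^sub>F \<eta> in at_right 0. K < a / (4 * \<eta>)"
    by (simp add: filterlim_at_top_dense)
  moreover have "filterlim (\<lambda>\<eta>. \<beta> * \<gamma> * ln (2 / \<eta>)) at_top (at_right 0)"
    using \<beta> \<gamma> by real_asymp
  then have "\<forall>\<^sub>F \<eta> in at_right 0. K < \<beta> * \<gamma> * ln (2 / \<eta>)"
    by (simp add: filterlim_at_top_dense)
  ultimately show ?thesis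
  proof eventually_elim
    case (elim \<eta>)
    show ?case
    proof (intro allI impI ballI)
      fix l :: real and q :: "real^'m"
      assume "0 < l" "q \<in> Qclosed \<eta> l - Qopen \<eta> l"
      with elim reduced_energy_boundary_lower[OF s(1) a \<beta> _ _ this] show
        "M < slot_sum (\<lambda>x. reduced_term s a \<beta> (\<bar>x\<bar> / l)) q"
        using slot_sum_const[of "- (\<beta>^2 / (2 * a))" q 0] by (simp add: K_def \<gamma>_def)
    qed
  qed
qed

lemma compact_attains_inf_in_subset:
  fixes f :: "'a::topological_space \<Rightarrow> real"
  assumes "compact C" "continuous_on C f" "A \<subseteq> C" "q0 \<in> A"
    and boundary: "\<And>p. p \<in> C - A \<Longrightarrow> f q0 < f p"
  shows "\<exists>q\<in>A. \<forall>p\<in>C. f q \<le> f p"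
proof -
  have "C \<noteq> {}"
    using assms(3,4) by blast
  obtain q where q: "q \<in> C" "\<And>p. p \<in> C \<Longrightarrow> f q \<le> f p"
    using continuous_attains_inf[OF assms(1) \<open>C \<noteq> {}\<close> assms(2)] by blast
  have "f q \<le> f q0"
    using q(2) assms(3,4) by blast
  then have "q \<in> A"
    using boundary[of q] q(1) by fastforce
  with q show ?thesis
    by blast
qed

lemma Xi_rescaled_bounds:
  fixes p :: "real^'m"
  assumes s: "1/2 \<le> s" "s < 1" and \<epsilon>: "0 < \<epsilon>" "\<epsilon> < 1" and \<alpha>: "0 < \<alpha>" and R: "0 < R"
    and U_bounds: "\<And>x. R \<le> \<bar>x\<bar> \<Longrightarrow>
      b * \<bar>x\<bar> powr (-1 - 2 * s) / 2 \<le> U x \<and> U x \<le> 2 * (b * \<bar>x\<bar> powr (-1 - 2 * s))"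
    and far: "\<And>x. x \<in> slots p \<Longrightarrow> R \<le> \<bar>x\<bar>"
  shows "slot_sum (\<lambda>_. Xi_shift s \<beta> \<epsilon>) p + ell s \<epsilon> powr (-1 - 2 * s)
           * slot_sum (\<lambda>x. reduced_term s (\<alpha> * b / 2) \<beta> (\<bar>x\<bar> / ell s \<epsilon>)) p
         \<le> Xi s \<alpha> \<beta> U \<epsilon> p"
    and "Xi s \<alpha> \<beta> U \<epsilon> p
         \<le> slot_sum (\<lambda>_. Xi_shift s \<beta> \<epsilon>) p + ell s \<epsilon> powr (-1 - 2 * s)
           * slot_sum (\<lambda>x. reduced_term s (2 * \<alpha> * b) \<beta> (\<bar>x\<bar> / ell s \<epsilon>)) p"
proof -
  have "x \<noteq> 0" "b * \<bar>x\<bar> powr (-1 - 2 * s) / 2 \<le> U x" "U x \<le> 2 * (b * \<bar>x\<bar> powr (-1 - 2 * s))"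
    if "x \<in> slots p" for x
    using far[OF that] R U_bounds[OF far[OF that]] by auto
  note slot = Xi_term_bounds[where \<beta> = \<beta> and U = U and b = b, OF s \<epsilon> \<alpha> this]
  show "slot_sum (\<lambda>_. Xi_shift s \<beta> \<epsilon>) p + ell s \<epsilon> powr (-1 - 2 * s)
           * slot_sum (\<lambda>x. reduced_term s (\<alpha> * b / 2) \<beta> (\<bar>x\<bar> / ell s \<epsilon>)) p
         \<le> Xi s \<alpha> \<beta> U \<epsilon> p"
    unfolding Xi_eq_slot_sum slot_sum_affine[symmetric] by (intro slot_sum_mono slot(1))
  show "Xi s \<alpha> \<beta> U \<epsilon> p
         \<le> slot_sum (\<lambda>_. Xi_shift s \<beta> \<epsilon>) p + ell s \<epsilon> powr (-1 - 2 * s)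
           * slot_sum (\<lambda>x. reduced_term s (2 * \<alpha> * b) \<beta> (\<bar>x\<bar> / ell s \<epsilon>)) p"
    unfolding Xi_eq_slot_sum slot_sum_affine[symmetric] by (intro slot_sum_mono slot(2))
qed

lemma Xi_min_in_Qset:
  fixes y0 :: "real^'m"
  assumes s: "1/2 \<le> s" "s < 1" and \<alpha>: "0 < \<alpha>" and \<beta>: "0 < \<beta>"
    and U_cont: "continuous_on UNIV U" and R: "0 < R"
    and U_bounds: "\<And>x. R \<le> \<bar>x\<bar> \<Longrightarrow>
      b * \<bar>x\<bar> powr (-1 - 2 * s) / 2 \<le> U x \<and> U x \<le> 2 * (b * \<bar>x\<bar> powr (-1 - 2 * s))"
    and \<epsilon>: "0 < \<epsilon>" "\<epsilon> < 1" and \<eta>: "0 < \<eta>" and \<eta>R: "R \<le> \<eta> * ell s \<epsilon>"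
    and y0: "y0 \<in> Qopen \<eta> 1"
    and boundary: "\<forall>q \<in> Qclosed \<eta> (ell s \<epsilon>) - Qopen \<eta> (ell s \<epsilon>).
      slot_sum (\<lambda>x. reduced_term s (2 * \<alpha> * b) \<beta> \<bar>x\<bar>) y0
        < slot_sum (\<lambda>x. reduced_term s (\<alpha> * b / 2) \<beta> (\<bar>x\<bar> / ell s \<epsilon>)) (q :: real^'m)"
  shows "\<exists>q \<in> (Qset s \<eta> \<epsilon> :: (real^'m) set).
           \<forall>p :: real^'m \<in> closure (Qset s \<eta> \<epsilon>). Xi s \<alpha> \<beta> U \<epsilon> q \<le> Xi s \<alpha> \<beta> U \<epsilon> p"
proof -
  define l where "l = ell s \<epsilon>"
  have l: "0 < l"
    using ell_pos[OF \<epsilon>] by (simp add: l_def)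
  define \<kappa> where "\<kappa> = l powr (-1 - 2 * s)"
  define shift where "shift = slot_sum (\<lambda>_. Xi_shift s \<beta> \<epsilon>) (0 :: real^'m)"
  define q0 where "q0 = l *\<^sub>R y0"
  have far: "R \<le> \<bar>x\<bar>" if "p \<in> Qclosed \<eta> l" "x \<in> slots p" for p :: "real^'m" and x
  proof -
    have "\<eta> * l \<le> \<bar>x\<bar>"
      using Qclosed_slot_abs_ge[OF that(1) _ that(2)] \<eta> l by simp
    then show ?thesis
      using \<eta>R unfolding l_def by linarith
  qed
  have bounds:
    "shift + \<kappa> * slot_sum (\<lambda>x. reduced_term s (\<alpha> * b / 2) \<beta> (\<bar>x\<bar> / l)) p \<le> Xi s \<alpha> \<beta> U \<epsilon> p"
    "Xi s \<alpha> \<beta> U \<epsilon> p \<le> shift + \<kappa> * slot_sum (\<lambda>x. reduced_term s (2 * \<alpha> * b) \<beta> (\<bar>x\<bar> / l)) p"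
    if "p \<in> Qclosed \<eta> l" for p :: "real^'m"
    using Xi_rescaled_bounds[where p = p and \<beta> = \<beta>, OF s \<epsilon> \<alpha> R U_bounds far[OF that]] slot_sum_const[of "Xi_shift s \<beta> \<epsilon>" p 0]
    unfolding shift_def \<kappa>_def l_def by simp_all
  have q0_Q: "q0 \<in> Qopen \<eta> l"
    unfolding q0_def using scaleR_mem_Qopen[OF l y0] .
  have "Xi s \<alpha> \<beta> U \<epsilon> q0 \<le> shift + \<kappa> * slot_sum (\<lambda>x. reduced_term s (2 * \<alpha> * b) \<beta> (\<bar>x\<bar> / l)) q0"
    using bounds(2) Qopen_subset_Qclosed q0_Q by blast
  also have "slot_sum (\<lambda>x. reduced_term s (2 * \<alpha> * b) \<beta> (\<bar>x\<bar> / l)) q0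
      = slot_sum (\<lambda>x. reduced_term s (2 * \<alpha> * b) \<beta> \<bar>x\<bar>) y0"
    using slot_sum_scaleR[of l "\<lambda>x. reduced_term s (2 * \<alpha> * b) \<beta> \<bar>x\<bar>" y0] l
    by (simp add: q0_def abs_divide)
  finally have Xi_q0: "Xi s \<alpha> \<beta> U \<epsilon> q0 \<le> shift + \<kappa> * slot_sum (\<lambda>x. reduced_term s (2 * \<alpha> * b) \<beta> \<bar>x\<bar>) y0" .
  have Xi_boundary: "Xi s \<alpha> \<beta> U \<epsilon> q0 < Xi s \<alpha> \<beta> U \<epsilon> p" if p: "p \<in> Qclosed \<eta> l - Qopen \<eta> l" for p :: "real^'m"
  proof -
    have "slot_sum (\<lambda>x. reduced_term s (2 * \<alpha> * b) \<beta> \<bar>x\<bar>) y0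
        < slot_sum (\<lambda>x. reduced_term s (\<alpha> * b / 2) \<beta> (\<bar>x\<bar> / l)) p"
      using boundary p unfolding l_def by (rule bspec)
    then have "\<kappa> * slot_sum (\<lambda>x. reduced_term s (2 * \<alpha> * b) \<beta> \<bar>x\<bar>) y0
        < \<kappa> * slot_sum (\<lambda>x. reduced_term s (\<alpha> * b / 2) \<beta> (\<bar>x\<bar> / l)) p"
      using l by (simp add: \<kappa>_def)
    then have "Xi s \<alpha> \<beta> U \<epsilon> q0 < shift + \<kappa> * slot_sum (\<lambda>x. reduced_term s (\<alpha> * b / 2) \<beta> (\<bar>x\<bar> / l)) p"
      by (rule order_le_less_trans[OF Xi_q0 add_strict_left_mono])
    also have "\<dots> \<le> Xi s \<alpha> \<beta> U \<epsilon> p"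
      using bounds(1) p by blast
    finally show ?thesis .
  qed
  have Xi_cont: "continuous_on (Qclosed \<eta> l :: (real^'m) set) (Xi s \<alpha> \<beta> U \<epsilon>)"
  proof (intro continuous_at_imp_continuous_on ballI)
    fix p :: "real^'m"
    assume p: "p \<in> Qclosed \<eta> l"
    have "isCont (Xi_term s \<alpha> \<beta> U \<epsilon>) x" if "x \<in> slots p" for x
    proof (rule isCont_Xi_term[OF U_cont])
      show "x \<noteq> 0"
        using far[OF p that] R by auto
    qed
    then show "isCont (Xi s \<alpha> \<beta> U \<epsilon>) p"
      unfolding Xi_eq_slot_sum by (rule isCont_slot_sum)
  qed
  have "\<exists>q \<in> Qopen \<eta> l. \<forall>p \<in> Qclosed \<eta> l.
    Xi s \<alpha> \<beta> U \<epsilon> (q :: real^'m) \<le> Xi s \<alpha> \<beta> U \<epsilon> (p :: real^'m)"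
    using compact_attains_inf_in_subset[OF compact_Qclosed Xi_cont Qopen_subset_Qclosed q0_Q] Xi_boundary
    by blast
  moreover have "closure (Qopen \<eta> l) \<subseteq> (Qclosed \<eta> l :: (real^'m) set)"
    by (intro closure_minimal Qopen_subset_Qclosed compact_imp_closed compact_Qclosed)
  ultimately show ?thesis
    unfolding Qset_eq_Qopen l_def[symmetric] by blast
qed

lemma Xi_min_in_Qset_eventually:
  fixes y0 :: "real^'m"
  assumes s: "1/2 \<le> s" "s < 1" and \<alpha>: "0 < \<alpha>" and \<beta>: "0 < \<beta>"
    and U_cont: "continuous_on UNIV U" and R: "0 < R"
    and U_bounds: "\<And>x. R \<le> \<bar>x\<bar> \<Longrightarrow>
      b * \<bar>x\<bar> powr (-1 - 2 * s) / 2 \<le> U x \<and> U x \<le> 2 * (b * \<bar>x\<bar> powr (-1 - 2 * s))"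
    and \<eta>: "0 < \<eta>" and y0: "y0 \<in> Qopen \<eta> 1"
    and boundary: "\<forall>l>0. \<forall>q \<in> Qclosed \<eta> l - Qopen \<eta> l.
      slot_sum (\<lambda>x. reduced_term s (2 * \<alpha> * b) \<beta> \<bar>x\<bar>) y0
        < slot_sum (\<lambda>x. reduced_term s (\<alpha> * b / 2) \<beta> (\<bar>x\<bar> / l)) (q :: real^'m)"
  shows "\<forall>\<^sub>F \<epsilon> in at_right 0. \<exists>q \<in> (Qset s \<eta> \<epsilon> :: (real^'m) set).
           \<forall>p :: real^'m \<in> closure (Qset s \<eta> \<epsilon>). Xi s \<alpha> \<beta> U \<epsilon> q \<le> Xi s \<alpha> \<beta> U \<epsilon> p"
proof -
  have "\<forall>\<^sub>F \<epsilon> in at_right 0. 0 < \<epsilon> \<and> \<epsilon> < 1 \<and> R / \<eta> \<le> ell s \<epsilon>"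
    using ell_at_top[OF s] unfolding filterlim_at_top
    by (intro eventually_conj eventually_at_right_less)
      (auto simp: eventually_at_right_field intro!: exI[of _ 1])
  then show ?thesis
  proof eventually_elim
    case (elim \<epsilon>)
    then have \<epsilon>: "0 < \<epsilon>" "\<epsilon> < 1" and "R \<le> \<eta> * ell s \<epsilon>"
      using \<eta> by (simp_all add: field_simps)
    moreover have "0 < ell s \<epsilon>"
      using ell_pos[OF \<epsilon>] .
    ultimately show ?case
      using boundary by (intro Xi_min_in_Qset[OF s \<alpha> \<beta> U_cont R U_bounds \<epsilon> \<eta> _ y0]) auto
  qed
qed

theorem lemma8p1:
  fixes s \<alpha> \<beta> :: real and U :: "real \<Rightarrow> real"
  assumes s: "1/2 \<le> s" "s < 1"
    and \<alpha>: "0 < \<alpha>" and \<beta>: "0 < \<beta>"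
    and U: "is_ground_state s U"
    and U_asym: "\<exists>b>0. ((\<lambda>x. U x / (b * (\<bar>x\<bar>) powr (-1 - 2* s))) \<longlongrightarrow> 1) at_infinity"
  shows "\<exists>\<eta>0>0. \<forall>\<eta>. 0 < \<eta> \<and> \<eta> < \<eta>0 \<longrightarrow>
           (\<exists>\<epsilon>0>0. \<forall>\<epsilon>. 0 < \<epsilon> \<and> \<epsilon> < \<epsilon>0 \<longrightarrow>
              (\<exists>q \<in> (Qset s \<eta> \<epsilon> :: (real^'m) set).
                 \<forall>p :: real^'m \<in> closure (Qset s \<eta> \<epsilon>). Xi s \<alpha> \<beta> U \<epsilon> q \<le> Xi s \<alpha> \<beta> U \<epsilon> p))"
proof -
  obtain b where b: "0 < b" and U_lim: "((\<lambda>x. U x / (b * \<bar>x\<bar> powr (-1 - 2 * s))) \<longlongrightarrow> 1) at_infinity"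
    using U_asym by blast
  obtain R where R: "0 < R" and U_bounds: "\<And>x. R \<le> \<bar>x\<bar> \<Longrightarrow>
      b * \<bar>x\<bar> powr (-1 - 2 * s) / 2 \<le> U x \<and> U x \<le> 2 * (b * \<bar>x\<bar> powr (-1 - 2 * s))"
    using asymp_power_tail_bounds[OF b U_lim] by blast
  have U_cont: "continuous_on UNIV U"
    using U by (simp add: is_ground_state_def)
  obtain y0 :: "real^'m" where y0: "\<forall>\<^sub>F \<eta> in at_right 0. y0 \<in> Qopen \<eta> 1"
    using eventually_mem_Qopen by blast
  have "\<forall>\<^sub>F \<eta> in at_right 0. 0 < \<eta> \<and> y0 \<in> Qopen \<eta> 1 \<and> (\<forall>l>0. \<forall>q \<in> Qclosed \<eta> l - Qopen \<eta> l.
      slot_sum (\<lambda>x. reduced_term s (2 * \<alpha> * b) \<beta> \<bar>x\<bar>) y0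
        < slot_sum (\<lambda>x. reduced_term s (\<alpha> * b / 2) \<beta> (\<bar>x\<bar> / l)) (q :: real^'m))"
    using \<alpha> b by (intro eventually_conj eventually_at_right_less y0 reduced_energy_boundary_blowup s \<beta>) simp
  then have "\<forall>\<^sub>F \<eta> in at_right 0. \<forall>\<^sub>F \<epsilon> in at_right 0. \<exists>q \<in> (Qset s \<eta> \<epsilon> :: (real^'m) set).
      \<forall>p :: real^'m \<in> closure (Qset s \<eta> \<epsilon>). Xi s \<alpha> \<beta> U \<epsilon> q \<le> Xi s \<alpha> \<beta> U \<epsilon> p"
    by eventually_elim (auto intro!: Xi_min_in_Qset_eventually[OF s \<alpha> \<beta> U_cont R U_bounds])
  then show ?thesis
    unfolding eventually_at_right_field imp_conjL .
qed

end
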